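(* Let $d$ be a positive integer, $0<p<1$, and let $\mu$ be a Borel probability measure on $\mathbb{S}^{d-1}$. Then $$\int_{\mathbb{S}^{d-1}}\int_{\mathbb{S}^{d-1}}\int_{\mathbb{S}^{d-1}}\left|\langle x,y\rangle\langle x,z\rangle\langle y,z\rangle\right|^p\,d\mu(x)\,d\mu(y)\,d\mu(z)\ge\frac{1}{d^2},$$ with equality if and only if $\mu$ is, up to central symmetry, the uniform distribution over an orthonormal basis; that is, if and only if there is an orthonormal basis $e_1,\dots,e_d$ of $\mathbb{R}^d$ such that $\mu$ is supported on $\{\pm e_1,\dots,\pm e_d\}$ and $\mu(\{e_j,-e_j\})=\frac1d$ for each $j=1,\dots,d$.
   Context: $\mathbb{S}^{d-1}$ is the unit sphere of $\mathbb{R}^d$ and $\langle\cdot,\cdot\rangle$ the Euclidean inner product. *)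

theory Defs
  imports "HOL-Probability.Probability"
begin

definition triple_energy :: "real \<Rightarrow> 'a::euclidean_space measure \<Rightarrow> real" where
  "triple_energy p M =
     (\<integral>z. (\<integral>y. (\<integral>x. \<bar>(x \<bullet> y) * (x \<bullet> z) * (y \<bullet> z)\<bar> powr p \<partial>M) \<partial>M) \<partial>M)"

end

theory Submission
  imports Defs
begin

(* Let A = integral of x x^T d mu(x) be the second-moment operator of mu; its trace is 1.
   Since |<x,y><x,z><y,z>| <= 1, the integrand is at most its p-th absolute power, and its own
   triple integral is integral |A z|^2 d mu(z) = tr A^3. By Cauchy-Schwarz this is at least
   (integral <z, A z> d mu(z))^2 = (tr A^2)^2, and tr A^2 >= (tr A)^2 / d = 1/d, whence the
   bound 1/d^2.
   At equality A = I/d, and the integrand equals its p-th absolute power almost everywhere, so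
   it only takes the values 0 and 1. By continuity <x,y>^2 is 0 or 1 for all x, y in the
   support of mu, so the support lies in {r, -r | r in R} for an orthonormal set R. Isotropy
   forces R to be a basis with mass 1/d on each pair {r, -r}; conversely, such a measure has
   triple energy d * (1/d)^3. *)

lemma sum_squares_eq_trace_square_plus_deviation:
  fixes c :: "'b \<Rightarrow> 'b \<Rightarrow> real"
  assumes "finite B"
  defines "t \<equiv> \<Sum>i\<in>B. c i i" and "n \<equiv> real (card B)"
  shows "(\<Sum>i\<in>B. \<Sum>j\<in>B. (c i j)\<^sup>2) =
    t\<^sup>2 / n + (\<Sum>i\<in>B. \<Sum>j\<in>B. (c i j - (if i = j then t / n else 0))\<^sup>2)"
proof (cases "B = {}")
  case False
  then have "n > 0" using assms(1) by (simp add: n_def card_gt_0_iff)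
  have "(\<Sum>j\<in>B. (c i j - (if i = j then t / n else 0))\<^sup>2) =
      (\<Sum>j\<in>B. (c i j)\<^sup>2) - (2 * t / n * c i i - (t / n)\<^sup>2)" if "i \<in> B" for i
  proof -
    have "(\<Sum>j\<in>B. (c i j - (if i = j then t / n else 0))\<^sup>2) =
        (\<Sum>j\<in>B. (c i j)\<^sup>2 - (if i = j then 2 * t / n * c i i - (t / n)\<^sup>2 else 0))"
      by (intro sum.cong) (auto simp: power2_diff)
    also have "\<dots> = (\<Sum>j\<in>B. (c i j)\<^sup>2) - (2 * t / n * c i i - (t / n)\<^sup>2)"
      using assms(1) that by (simp add: sum_subtractf)
    finally show ?thesis .
  qed
  then have "(\<Sum>i\<in>B. \<Sum>j\<in>B. (c i j - (if i = j then t / n else 0))\<^sup>2) =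
      (\<Sum>i\<in>B. \<Sum>j\<in>B. (c i j)\<^sup>2) - (2 * t / n * t - n * (t / n)\<^sup>2)"
    by (simp add: sum_subtractf sum_distrib_left t_def n_def)
  also have "2 * t / n * t - n * (t / n)\<^sup>2 = t\<^sup>2 / n"
    using \<open>n > 0\<close> by (simp add: field_simps power2_eq_square)
  finally show ?thesis by simp
qed (simp add: t_def n_def)

lemma sum_squares_ge_trace_square_div_card:
  fixes c :: "'b \<Rightarrow> 'b \<Rightarrow> real"
  assumes "finite B"
  shows "(\<Sum>i\<in>B. c i i)\<^sup>2 / real (card B) \<le> (\<Sum>i\<in>B. \<Sum>j\<in>B. (c i j)\<^sup>2)"
  using sum_squares_eq_trace_square_plus_deviation[OF assms, of c]
  by (simp add: sum_nonneg)

lemma sum_squares_eq_trace_square_div_cardD: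
  fixes c :: "'b \<Rightarrow> 'b \<Rightarrow> real"
  assumes "finite B" and "(\<Sum>i\<in>B. \<Sum>j\<in>B. (c i j)\<^sup>2) = (\<Sum>i\<in>B. c i i)\<^sup>2 / real (card B)"
    and "i \<in> B" and "j \<in> B"
  shows "c i j = (if i = j then (\<Sum>i\<in>B. c i i) / real (card B) else 0)"
proof -
  let ?dev = "\<lambda>i j. (c i j - (if i = j then (\<Sum>i\<in>B. c i i) / real (card B) else 0))\<^sup>2"
  have "(\<Sum>i\<in>B. \<Sum>j\<in>B. ?dev i j) = 0"
    using assms(2) sum_squares_eq_trace_square_plus_deviation[OF assms(1), of c] by simp
  then have "(\<Sum>j\<in>B. ?dev i j) = 0"
    using assms(1,3) by (simp add: sum_nonneg sum_nonneg_eq_0_iff)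
  then have "?dev i j = 0"
    using assms(1,4) by (simp add: sum_nonneg_eq_0_iff)
  then show ?thesis by simp
qed

lemma le_abs_powr:
  fixes t p :: real
  assumes "\<bar>t\<bar> \<le> 1" and "p \<le> 1"
  shows "t \<le> \<bar>t\<bar> powr p"
proof (cases "t = 0")
  case False
  then have "\<bar>t\<bar> powr 1 \<le> \<bar>t\<bar> powr p"
    using assms by (intro powr_mono') auto
  then show ?thesis by simp
qed simp

lemma eq_abs_powr_iff:
  fixes t p :: real
  assumes "0 < p" and "p < 1"
  shows "t = \<bar>t\<bar> powr p \<longleftrightarrow> t = 0 \<or> t = 1"
proof
  assume t: "t = \<bar>t\<bar> powr p"
  show "t = 0 \<or> t = 1"
  proof (rule ccontr)
    assume "\<not> (t = 0 \<or> t = 1)"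
    then have "t > 0" using t by (metis powr_ge_zero order_le_less)
    moreover have "t powr p = t powr 1" using t \<open>t > 0\<close> by simp
    ultimately show False using \<open>\<not> (t = 0 \<or> t = 1)\<close> assms(2) powr_inj[of t p 1] by simp
  qed
qed (use assms in auto)

lemma abs_inner_le_norm_if_unit:
  fixes x u :: "'a::real_inner"
  shows "norm x = 1 \<Longrightarrow> \<bar>x \<bullet> u\<bar> \<le> norm u"
  using Cauchy_Schwarz_ineq2[of x u] by simp

lemma unit_vectors_inner_square_eq_1:
  fixes u v :: "'a::real_inner"
  assumes "norm u = 1" and "norm v = 1" and "(u \<bullet> v)\<^sup>2 = 1"
  shows "v = u \<or> v = - u"
proof -
  have "u \<bullet> v = 1 \<or> u \<bullet> v = - 1" using assms(3) by (simp add: power2_eq_1_iff)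
  then have "\<bar>u \<bullet> v\<bar> = norm u * norm v" using assms by auto
  then have "norm u *\<^sub>R v = norm v *\<^sub>R u \<or> norm u *\<^sub>R v = - norm v *\<^sub>R u"
    by (simp only: norm_cauchy_schwarz_abs_eq)
  then show ?thesis using assms by auto
qed

lemma obtain_orthonormal_representatives:
  fixes S :: "'a::real_inner set"
  assumes unit: "S \<subseteq> sphere 0 1"
    and dichotomy: "\<And>x y. x \<in> S \<Longrightarrow> y \<in> S \<Longrightarrow> x \<bullet> y = 0 \<or> (x \<bullet> y)\<^sup>2 = 1"
  obtains R where "pairwise orthogonal R" and "R \<subseteq> sphere 0 1" and "S \<subseteq> R \<union> uminus ` R"
proof
  define rep where "rep x = (SOME y. y \<in> {x, - x})" for x :: 'a
  have rep: "rep x = x \<or> rep x = - x" for x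
    using someI[of "\<lambda>y. y \<in> {x, - x}" x] by (auto simp: rep_def)
  have rep_uminus: "rep (- x) = rep x" for x
    by (simp add: rep_def insert_commute)
  show "pairwise orthogonal (rep ` S)"
  proof (clarsimp simp: pairwise_def)
    fix a b assume ab: "a \<in> S" "b \<in> S" "rep a \<noteq> rep b"
    have "(a \<bullet> b)\<^sup>2 \<noteq> 1"
    proof
      assume "(a \<bullet> b)\<^sup>2 = 1"
      moreover have "norm a = 1" "norm b = 1" using unit ab(1,2) by auto
      ultimately have "b = a \<or> b = - a" by (rule unit_vectors_inner_square_eq_1[rotated 2])
      then show False using ab(3) rep_uminus by auto
    qed
    then have "a \<bullet> b = 0" using dichotomy ab(1,2) by blast
    then show "orthogonal (rep a) (rep b)"
      using rep[of a] rep[of b] by (auto simp: orthogonal_def)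
  qed
  show "rep ` S \<subseteq> sphere 0 1"
  proof
    fix r assume "r \<in> rep ` S"
    then obtain x where "x \<in> S" "r = x \<or> r = - x" using rep by blast
    then show "r \<in> sphere 0 1" using unit by auto
  qed
  show "S \<subseteq> rep ` S \<union> uminus ` rep ` S"
  proof
    fix x assume "x \<in> S"
    then have "rep x \<in> rep ` S" by blast
    then show "x \<in> rep ` S \<union> uminus ` rep ` S"
      using rep[of x] by (metis UnI1 UnI2 image_eqI minus_minus)
  qed
qed

lemma abs_inner_signed_orthonormal:
  fixes e :: "nat \<Rightarrow> 'a::real_inner"
  assumes "\<forall>i<n. \<forall>j<n. e i \<bullet> e j = (if i = j then 1 else 0)"
    and "i < n" "k < n" "x \<in> {e i, - e i}" "y \<in> {e k, - e k}"
  shows "\<bar>x \<bullet> y\<bar> = (if i = k then 1 else 0)"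
  using assms by auto

lemma signed_orthonormal_disjoint:
  fixes e :: "nat \<Rightarrow> 'a::real_inner"
  assumes "\<forall>i<n. \<forall>j<n. e i \<bullet> e j = (if i = j then 1 else 0)"
    and "i < n" "j < n" "x \<in> {e i, - e i}"
  shows "x \<in> {e j, - e j} \<longleftrightarrow> j = i"
  using abs_inner_signed_orthonormal[OF assms(1,2,3,4)] abs_inner_signed_orthonormal[OF assms(1,2,2,4,4)]
    assms(4)
  by (cases "j = i") auto

lemma inner_square_eq_sum_Basis:
  fixes x u :: "'a::euclidean_space"
  shows "(x \<bullet> u)\<^sup>2 = (\<Sum>i\<in>Basis. \<Sum>j\<in>Basis. (x \<bullet> i) * (x \<bullet> j) * ((u \<bullet> i) * (u \<bullet> j)))"
  by (simp add: power2_eq_square euclidean_inner[of x u] sum_product algebra_simps)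

definition inner_cycle :: "'a::real_inner \<Rightarrow> 'a \<Rightarrow> 'a \<Rightarrow> real" where
  "inner_cycle x y z = (x \<bullet> y) * (x \<bullet> z) * (y \<bullet> z)"

lemma abs_inner_cycle_le_1:
  fixes x y z :: "'a::real_inner"
  assumes "norm x = 1" and "norm y = 1" and "norm z = 1"
  shows "\<bar>inner_cycle x y z\<bar> \<le> 1"
  using abs_inner_le_norm_if_unit[of x y] abs_inner_le_norm_if_unit[of x z]
    abs_inner_le_norm_if_unit[of y z] assms
  unfolding inner_cycle_def abs_mult by (intro mult_le_one) auto

lemma continuous_on_inner_cycle: "continuous_on UNIV (\<lambda>(x, y, z). inner_cycle x y z)"
  unfolding inner_cycle_def case_prod_beta' by (intro continuous_intros)

lemma case_prod_nested_eq: "(\<lambda>((z, y), x). F x y z) = (\<lambda>w. F (snd w) (snd (fst w)) (fst (fst w)))"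
  by (auto simp: fun_eq_iff split: prod.split)

lemma borel_measurable_inner_cycle:
  "(\<lambda>((z, y), x). inner_cycle x y (z :: 'a::euclidean_space)) \<in> borel_measurable borel"
  "(\<lambda>((z, y), x). \<bar>inner_cycle x y (z :: 'a)\<bar> powr p) \<in> borel_measurable borel"
  unfolding case_prod_nested_eq inner_cycle_def borel_prod[symmetric] by measurable

lemma abs_inner_cycle_powr_signed_orthonormal:
  fixes e :: "nat \<Rightarrow> 'a::real_inner"
  assumes onb: "\<forall>i<n. \<forall>j<n. e i \<bullet> e j = (if i = j then 1 else 0)" and "0 < p"
    and "x \<in> (\<Union>j<n. {e j, - e j})" "y \<in> (\<Union>j<n. {e j, - e j})" "z \<in> (\<Union>j<n. {e j, - e j})"
  shows "\<bar>inner_cycle x y z\<bar> powr p = (\<Sum>j<n.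
    indicator {e j, - e j} x * indicator {e j, - e j} y * indicator {e j, - e j} z)"
proof -
  obtain i k l where ikl: "i < n" "k < n" "l < n"
    and xyz: "x \<in> {e i, - e i}" "y \<in> {e k, - e k}" "z \<in> {e l, - e l}"
    using assms(3-5) by blast
  note abs_inner = abs_inner_signed_orthonormal[OF onb] and disj = signed_orthonormal_disjoint[OF onb]
  have "\<bar>inner_cycle x y z\<bar> = (if i = k \<and> i = l then 1 else 0)"
    using abs_inner[of i k x y] abs_inner[of i l x z] abs_inner[of k l y z] ikl xyz
    by (auto simp: inner_cycle_def abs_mult)
  moreover have "(\<Sum>j<n. indicator {e j, - e j} x * indicator {e j, - e j} y * indicator {e j, - e j} z) =
      (\<Sum>j<n. if j = i then (if i = k \<and> i = l then 1 else 0) else (0::real))"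
    using disj[of i _ x] disj[of k _ y] disj[of l _ z] ikl xyz
    by (intro sum.cong) (auto simp: indicator_def)
  ultimately show ?thesis using ikl(1) assms(2) by simp
qed

section \<open>The support of a Borel measure\<close>

definition measure_support :: "'a::metric_space measure \<Rightarrow> 'a set" where
  "measure_support M = {x. \<forall>r>0. emeasure M (ball x r) \<noteq> 0}"

lemma AE_in_measure_support:
  fixes M :: "'a::{metric_space, second_countable_topology} measure"
  assumes M: "sets M = sets borel"
  shows "AE x in M. x \<in> measure_support M"
proof -
  define \<F> where "\<F> = {ball x r |x r. r > 0 \<and> emeasure M (ball x r) = 0}"
  obtain \<F>' where \<F>': "\<F>' \<subseteq> \<F>" "countable \<F>'" "\<Union>\<F>' = \<Union>\<F>"
    using Lindelof[of \<F>] by (auto simp: \<F>_def)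
  have "\<Union>\<F>' \<in> null_sets M"
    using \<F>'(1) by (intro null_sets_UN'[OF \<F>'(2), of id, simplified]) (auto simp: \<F>_def M null_sets_def)
  moreover have "{x \<in> space M. x \<notin> measure_support M} \<subseteq> \<Union>\<F>'"
    using \<F>'(3) by (force simp: measure_support_def \<F>_def)
  ultimately show ?thesis by (rule AE_I')
qed

lemma AE_imp_ex_in_open_neighbourhood:
  assumes M: "sets M = sets borel" and P: "AE x in M. P x"
    and x0: "x0 \<in> measure_support M" and A: "open A" "x0 \<in> A"
  shows "\<exists>x\<in>A. P x"
proof (rule ccontr)
  assume "\<not> (\<exists>x\<in>A. P x)"
  obtain r where r: "r > 0" "ball x0 r \<subseteq> A" using A open_contains_ball by blast
  have "AE x in M. x \<notin> ball x0 r"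
    using P by (rule eventually_mono) (use r(2) \<open>\<not> (\<exists>x\<in>A. P x)\<close> in blast)
  then have "emeasure M {x \<in> space M. x \<in> ball x0 r} = 0" by (rule emeasure_eq_0_AE)
  moreover have "{x \<in> space M. x \<in> ball x0 r} = ball x0 r"
    using sets_eq_imp_space_eq[OF M] by auto
  ultimately show False using x0 r(1) by (simp add: measure_support_def)
qed

lemma measure_support_subset_closed:
  assumes M: "sets M = sets borel" and "closed C" and "AE x in M. x \<in> C"
  shows "measure_support M \<subseteq> C"
  using AE_imp_ex_in_open_neighbourhood[OF M assms(3), of _ "- C"] assms(2)
  by (auto simp: open_Compl)

lemma AE3_closed_on_measure_support:
  fixes F :: "'a::metric_space \<Rightarrow> 'a \<Rightarrow> 'a \<Rightarrow> 'b::topological_space"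
  assumes M: "sets M = sets borel" and F: "continuous_on UNIV (\<lambda>(x, y, z). F x y z)"
    and "closed C" and AE: "AE z in M. AE y in M. AE x in M. F x y z \<in> C"
    and x0: "x0 \<in> measure_support M" and y0: "y0 \<in> measure_support M"
    and z0: "z0 \<in> measure_support M"
  shows "F x0 y0 z0 \<in> C"
proof (rule ccontr)
  assume "F x0 y0 z0 \<notin> C"
  define U where "U = (\<lambda>(x, y, z). F x y z) -` (- C)"
  have "open U" unfolding U_def using \<open>closed C\<close> F by (intro open_vimage) auto
  moreover have "(x0, y0, z0) \<in> U" using \<open>F x0 y0 z0 \<notin> C\<close> by (simp add: U_def)
  ultimately obtain A BC where "open A" "open BC" "(x0, y0, z0) \<in> A \<times> BC" "A \<times> BC \<subseteq> U"
    by (rule open_prod_elim)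
  then have A: "open A" "x0 \<in> A" and BC: "open BC" "(y0, z0) \<in> BC" and "A \<times> BC \<subseteq> U"
    by auto
  obtain B C' where "open B" "open C'" "(y0, z0) \<in> B \<times> C'" "B \<times> C' \<subseteq> BC"
    using open_prod_elim[OF BC] by blast
  then have B: "open B" "y0 \<in> B" and C': "open C'" "z0 \<in> C'" and "B \<times> C' \<subseteq> BC"
    by auto
  obtain z where "z \<in> C'" and "AE y in M. AE x in M. F x y z \<in> C"
    using AE_imp_ex_in_open_neighbourhood[OF M AE z0 C'] by blast
  moreover obtain y where "y \<in> B" and "AE x in M. F x y z \<in> C"
    using AE_imp_ex_in_open_neighbourhood[OF M calculation(2) y0 B] by blast
  moreover obtain x where "x \<in> A" and "F x y z \<in> C"
    using AE_imp_ex_in_open_neighbourhood[OF M calculation(4) x0 A] by blast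
  ultimately have "(x, y, z) \<in> U" using \<open>A \<times> BC \<subseteq> U\<close> \<open>B \<times> C' \<subseteq> BC\<close> by blast
  with \<open>F x y z \<in> C\<close> show False by (simp add: U_def)
qed

definition triple_integral :: "'a measure \<Rightarrow> ('a \<Rightarrow> 'a \<Rightarrow> 'a \<Rightarrow> real) \<Rightarrow> real" where
  "triple_integral M F = (\<integral>z. \<integral>y. \<integral>x. F x y z \<partial>M \<partial>M \<partial>M)"

lemma triple_energy_eq_triple_integral:
  "triple_energy p M = triple_integral M (\<lambda>x y z. \<bar>inner_cycle x y z\<bar> powr p)"
  by (simp add: triple_energy_def triple_integral_def inner_cycle_def)

lemma (in prob_space) square_expectation_le:
  fixes X :: "'a \<Rightarrow> real"
  assumes "integrable M X" and "integrable M (\<lambda>x. (X x)\<^sup>2)"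
  shows "(expectation X)\<^sup>2 \<le> expectation (\<lambda>x. (X x)\<^sup>2)"
  using variance_positive[of X] variance_eq[OF assms] by simp

lemma (in finite_measure) triple_integral_sum_indicator_cubes:
  assumes "finite J" and "\<And>j. j \<in> J \<Longrightarrow> A j \<in> sets M"
  shows "triple_integral M (\<lambda>x y z. \<Sum>j\<in>J. indicator (A j) x * indicator (A j) y * indicator (A j) z)
    = (\<Sum>j\<in>J. (measure M (A j))^3)"
proof -
  have int: "integrable M (indicator (A j) :: _ \<Rightarrow> real)" if "j \<in> J" for j
    using assms(2)[OF that] by (simp add: emeasure_eq_measure)
  have A_space: "A j \<inter> space M = A j" if "j \<in> J" for j
    using sets.sets_into_space[OF assms(2)[OF that]] by blast
  have "(\<integral>x. (\<Sum>j\<in>J. indicator (A j) x * indicator (A j) y * indicator (A j) z) \<partial>M)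
      = (\<Sum>j\<in>J. measure M (A j) * indicator (A j) y * indicator (A j) z)" for y z
    using int A_space by (simp add: integral_sum mult.assoc)
  moreover have "(\<integral>y. (\<Sum>j\<in>J. measure M (A j) * indicator (A j) y * indicator (A j) z) \<partial>M)
      = (\<Sum>j\<in>J. (measure M (A j))\<^sup>2 * indicator (A j) z)" for z
    using int A_space by (simp add: integral_sum mult.assoc power2_eq_square)
  moreover have "(\<integral>z. (\<Sum>j\<in>J. (measure M (A j))\<^sup>2 * indicator (A j) z) \<partial>M)
      = (\<Sum>j\<in>J. (measure M (A j))^3)"
    using int A_space by (simp add: integral_sum power3_eq_cube power2_eq_square)
  ultimately show ?thesis by (simp add: triple_integral_def)
qed

locale sphere_probability = prob_space M for M :: "'a::euclidean_space measure" +
  assumes sets_eq_borel [measurable_cong]: "sets M = sets borel"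
    and AE_norm_eq_1: "AE x in M. norm x = 1"
begin

lemma space_eq_UNIV: "space M = UNIV"
  using sets_eq_imp_space_eq[OF sets_eq_borel] by simp

lemma borel_measurable_iff: "f \<in> borel_measurable M \<longleftrightarrow> f \<in> borel_measurable borel"
  by (simp add: measurable_cong_sets[OF sets_eq_borel refl])

lemma integrable_bounded_on_sphere:
  fixes h :: "'a \<Rightarrow> 'b::{banach, second_countable_topology}"
  assumes "h \<in> borel_measurable borel" and "\<And>x. norm x = 1 \<Longrightarrow> norm (h x) \<le> C"
  shows "integrable M h"
  using AE_norm_eq_1 assms
  by (intro integrable_const_bound[where B = C]) (auto elim!: eventually_mono simp: borel_measurable_iff)

lemma abs_integral_le_on_sphere:
  fixes h :: "'a \<Rightarrow> real"
  assumes "h \<in> borel_measurable borel" and "\<And>x. norm x = 1 \<Longrightarrow> \<bar>h x\<bar> \<le> C"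
  shows "\<bar>\<integral>x. h x \<partial>M\<bar> \<le> C"
proof -
  have "\<bar>\<integral>x. h x \<partial>M\<bar> \<le> (\<integral>x. \<bar>h x\<bar> \<partial>M)" by (rule integral_abs_bound)
  also have "\<dots> \<le> (\<integral>x. C \<partial>M)"
    using AE_norm_eq_1 assms integrable_bounded_on_sphere[OF assms(1), of C]
    by (intro integral_mono_AE) (auto elim!: eventually_mono)
  finally show ?thesis by (simp add: prob_space)
qed

lemma borel_measurable_integral_parametric:
  fixes h :: "'b::second_countable_topology \<Rightarrow> 'a \<Rightarrow> 'c::{banach, second_countable_topology}"
  assumes "case_prod h \<in> borel_measurable borel"
  shows "(\<lambda>y. \<integral>x. h y x \<partial>M) \<in> borel_measurable borel"
proof -
  have "sets (borel \<Otimes>\<^sub>M M) = sets (borel \<Otimes>\<^sub>M (borel :: 'a measure))"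
    by (rule sets_pair_measure_cong[OF refl sets_eq_borel])
  also have "\<dots> = sets (borel :: ('b \<times> 'a) measure)"
    by (simp only: borel_prod)
  finally have "case_prod h \<in> borel_measurable (borel \<Otimes>\<^sub>M M)"
    using assms measurable_cong_sets by blast
  then show ?thesis by (rule borel_measurable_lebesgue_integral)
qed

(* Joint measurability of a kernel F x y z is stated in the variable order ((z, y), x), so that
   each inner integral is a parametric integral over the last component. *)
lemma borel_measurable_partial_integrals:
  fixes F :: "'a \<Rightarrow> 'a \<Rightarrow> 'a \<Rightarrow> real"
  assumes F: "(\<lambda>((z, y), x). F x y z) \<in> borel_measurable borel"
  shows "(\<lambda>x. F x y z) \<in> borel_measurable borel"
    and "(\<lambda>y. \<integral>x. F x y z \<partial>M) \<in> borel_measurable borel"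
    and "(\<lambda>z. \<integral>y. \<integral>x. F x y z \<partial>M \<partial>M) \<in> borel_measurable borel"
proof -
  have "(\<lambda>((z, y), x). F x y z) \<circ> (\<lambda>x. ((z, y), x)) \<in> borel_measurable borel"
    by (intro measurable_comp[OF _ F] borel_measurable_continuous_onI continuous_intros)
  then show "(\<lambda>x. F x y z) \<in> borel_measurable borel" by (simp add: o_def)
  have "(\<lambda>((z, y), x). F x y z) \<circ> (\<lambda>w. ((z, fst w), snd w)) \<in> borel_measurable borel"
    by (intro measurable_comp[OF _ F] borel_measurable_continuous_onI continuous_intros)
  then have "(\<lambda>(y, x). F x y z) \<in> borel_measurable borel"
    by (simp add: o_def case_prod_beta')
  then show "(\<lambda>y. \<integral>x. F x y z \<partial>M) \<in> borel_measurable borel"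
    using borel_measurable_integral_parametric[of "\<lambda>y x. F x y z"] by simp
  have "(\<lambda>(z, y). \<integral>x. F x y z \<partial>M) \<in> borel_measurable borel"
    using borel_measurable_integral_parametric[of "\<lambda>w x. F x (snd w) (fst w)"] F
    by (simp add: case_prod_beta')
  then show "(\<lambda>z. \<integral>y. \<integral>x. F x y z \<partial>M \<partial>M) \<in> borel_measurable borel"
    using borel_measurable_integral_parametric[of "\<lambda>z y. \<integral>x. F x y z \<partial>M"] by simp
qed

lemma integrable_partial_integrals:
  fixes F :: "'a \<Rightarrow> 'a \<Rightarrow> 'a \<Rightarrow> real"
  assumes F: "(\<lambda>((z, y), x). F x y z) \<in> borel_measurable borel"
    and bound: "\<And>x y z. norm x = 1 \<Longrightarrow> norm y = 1 \<Longrightarrow> norm z = 1 \<Longrightarrow> \<bar>F x y z\<bar> \<le> C"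
  shows "norm y = 1 \<Longrightarrow> norm z = 1 \<Longrightarrow> integrable M (\<lambda>x. F x y z)"
    and "norm z = 1 \<Longrightarrow> integrable M (\<lambda>y. \<integral>x. F x y z \<partial>M)"
    and "integrable M (\<lambda>z. \<integral>y. \<integral>x. F x y z \<partial>M \<partial>M)"
proof -
  note meas = borel_measurable_partial_integrals[OF F]
  have bound1: "\<bar>\<integral>x. F x y z \<partial>M\<bar> \<le> C" if "norm y = 1" "norm z = 1" for y z
    using that bound by (intro abs_integral_le_on_sphere[OF meas(1)]) auto
  have bound2: "\<bar>\<integral>y. \<integral>x. F x y z \<partial>M \<partial>M\<bar> \<le> C" if "norm z = 1" for z
    using that bound1 by (intro abs_integral_le_on_sphere[OF meas(2)]) auto
  show "norm y = 1 \<Longrightarrow> norm z = 1 \<Longrightarrow> integrable M (\<lambda>x. F x y z)"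
    using bound by (intro integrable_bounded_on_sphere[OF meas(1)]) auto
  show "norm z = 1 \<Longrightarrow> integrable M (\<lambda>y. \<integral>x. F x y z \<partial>M)"
    using bound1 by (intro integrable_bounded_on_sphere[OF meas(2)]) auto
  show "integrable M (\<lambda>z. \<integral>y. \<integral>x. F x y z \<partial>M \<partial>M)"
    using bound2 by (intro integrable_bounded_on_sphere[OF meas(3)]) auto
qed

context
  fixes F G :: "'a \<Rightarrow> 'a \<Rightarrow> 'a \<Rightarrow> real" and C :: real
  assumes F: "(\<lambda>((z, y), x). F x y z) \<in> borel_measurable borel"
    and F_bound: "\<And>x y z. norm x = 1 \<Longrightarrow> norm y = 1 \<Longrightarrow> norm z = 1 \<Longrightarrow> \<bar>F x y z\<bar> \<le> C"
    and G: "(\<lambda>((z, y), x). G x y z) \<in> borel_measurable borel"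
    and G_bound: "\<And>x y z. norm x = 1 \<Longrightarrow> norm y = 1 \<Longrightarrow> norm z = 1 \<Longrightarrow> \<bar>G x y z\<bar> \<le> C"
    and le: "\<And>x y z. norm x = 1 \<Longrightarrow> norm y = 1 \<Longrightarrow> norm z = 1 \<Longrightarrow> F x y z \<le> G x y z"
begin

lemma partial_integrals_mono:
  shows "norm y = 1 \<Longrightarrow> norm z = 1 \<Longrightarrow> (\<integral>x. F x y z \<partial>M) \<le> (\<integral>x. G x y z \<partial>M)"
    and "norm z = 1 \<Longrightarrow> (\<integral>y. \<integral>x. F x y z \<partial>M \<partial>M) \<le> (\<integral>y. \<integral>x. G x y z \<partial>M \<partial>M)"
proof -
  note intF = integrable_partial_integrals[OF F F_bound]
    and intG = integrable_partial_integrals[OF G G_bound]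
  show le1: "(\<integral>x. F x y z \<partial>M) \<le> (\<integral>x. G x y z \<partial>M)" if "norm y = 1" "norm z = 1" for y z
    using AE_norm_eq_1 that le by (intro integral_mono_AE intF intG) (auto elim!: eventually_mono)
  show "norm z = 1 \<Longrightarrow> (\<integral>y. \<integral>x. F x y z \<partial>M \<partial>M) \<le> (\<integral>y. \<integral>x. G x y z \<partial>M \<partial>M)"
    using AE_norm_eq_1 le1 by (intro integral_mono_AE intF intG) (auto elim!: eventually_mono)
qed

lemma triple_integral_mono: "triple_integral M F \<le> triple_integral M G"
  unfolding triple_integral_def
  using AE_norm_eq_1 partial_integrals_mono(2)
  by (intro integral_mono_AE integrable_partial_integrals[OF F F_bound]
      integrable_partial_integrals[OF G G_bound]) (auto elim!: eventually_mono)

lemma triple_integral_eq_imp_AE_eq: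
  assumes "triple_integral M F = triple_integral M G"
  shows "AE z in M. AE y in M. AE x in M. F x y z = G x y z"
proof -
  note intF = integrable_partial_integrals[OF F F_bound]
    and intG = integrable_partial_integrals[OF G G_bound]
  have "AE z in M. (\<integral>y. \<integral>x. F x y z \<partial>M \<partial>M) = (\<integral>y. \<integral>x. G x y z \<partial>M \<partial>M)"
    using assms AE_norm_eq_1 partial_integrals_mono(2) unfolding triple_integral_def
    by (intro integral_eq_mono_AE_eq_AE intF intG) (auto elim!: eventually_mono)
  then show ?thesis
    using AE_norm_eq_1
  proof eventually_elim
    case z: (elim z)
    have "AE y in M. (\<integral>x. F x y z \<partial>M) = (\<integral>x. G x y z \<partial>M)"
      using z AE_norm_eq_1 partial_integrals_mono(1)
      by (intro integral_eq_mono_AE_eq_AE intF intG) (auto elim!: eventually_mono)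
    then show ?case
      using AE_norm_eq_1
    proof eventually_elim
      case (elim y)
      then show ?case
        using z AE_norm_eq_1 le
        by (intro integral_eq_mono_AE_eq_AE intF intG) (auto elim!: eventually_mono)
    qed
  qed
qed

end

lemma triple_integral_cong_AE:
  fixes F G :: "'a \<Rightarrow> 'a \<Rightarrow> 'a \<Rightarrow> real"
  assumes F: "(\<lambda>((z, y), x). F x y z) \<in> borel_measurable borel"
    and G: "(\<lambda>((z, y), x). G x y z) \<in> borel_measurable borel"
    and U: "AE x in M. x \<in> U"
    and eq: "\<And>x y z. x \<in> U \<Longrightarrow> y \<in> U \<Longrightarrow> z \<in> U \<Longrightarrow> F x y z = G x y z"
  shows "triple_integral M F = triple_integral M G"
proof -
  note measF = borel_measurable_partial_integrals[OF F, folded borel_measurable_iff]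
    and measG = borel_measurable_partial_integrals[OF G, folded borel_measurable_iff]
  have eq1: "(\<integral>x. F x y z \<partial>M) = (\<integral>x. G x y z \<partial>M)" if "y \<in> U" "z \<in> U" for y z
    using U that eq by (intro integral_cong_AE measF measG) (auto elim!: eventually_mono)
  have "(\<integral>y. \<integral>x. F x y z \<partial>M \<partial>M) = (\<integral>y. \<integral>x. G x y z \<partial>M \<partial>M)" if "z \<in> U" for z
    using U that eq1 by (intro integral_cong_AE measF measG) (auto elim!: eventually_mono)
  then show ?thesis
    unfolding triple_integral_def
    using U by (intro integral_cong_AE measF measG) (auto elim!: eventually_mono)
qed

end

section \<open>The second moment and the frame potential\<close>

definition frame_potential :: "'a::real_inner measure \<Rightarrow> real" where
  "frame_potential M = (\<integral>z. \<integral>y. (y \<bullet> z)\<^sup>2 \<partial>M \<partial>M)"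

definition second_moment :: "'a::euclidean_space measure \<Rightarrow> 'a \<Rightarrow> 'a" where
  "second_moment M z = (\<integral>x. (x \<bullet> z) *\<^sub>R x \<partial>M)"

context sphere_probability
begin

lemma integrable_inner_mult_inner: "integrable M (\<lambda>x. (x \<bullet> u) * (x \<bullet> v))"
proof (rule integrable_bounded_on_sphere[where C = "norm u * norm v"])
  fix x :: 'a assume "norm x = 1"
  then show "norm ((x \<bullet> u) * (x \<bullet> v)) \<le> norm u * norm v"
    using Cauchy_Schwarz_ineq2[of x u] Cauchy_Schwarz_ineq2[of x v]
    by (simp add: abs_mult mult_mono)
qed simp

lemma integrable_inner_scaleR: "integrable M (\<lambda>x. (x \<bullet> z) *\<^sub>R x)"
  using abs_inner_le_norm_if_unit[of _ z]
  by (intro integrable_bounded_on_sphere[where C = "norm z"]) auto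

lemma inner_second_moment: "(\<integral>x. (x \<bullet> y) * (x \<bullet> z) \<partial>M) = y \<bullet> second_moment M z"
proof -
  have "(\<integral>x. (x \<bullet> y) * (x \<bullet> z) \<partial>M) = (\<integral>x. y \<bullet> ((x \<bullet> z) *\<^sub>R x) \<partial>M)"
    by (simp add: inner_commute mult.commute)
  also have "\<dots> = y \<bullet> second_moment M z"
    unfolding second_moment_def by (rule integral_inner_right[OF integrable_inner_scaleR])
  finally show ?thesis .
qed

lemma norm_second_moment_le: "norm (second_moment M z) \<le> norm z"
proof -
  have "norm (second_moment M z) \<le> (\<integral>x. norm ((x \<bullet> z) *\<^sub>R x) \<partial>M)"
    unfolding second_moment_def by (rule integral_norm_bound)
  also have "\<dots> \<le> norm z"
    using abs_integral_le_on_sphere[of "\<lambda>x. norm ((x \<bullet> z) *\<^sub>R x)" "norm z"]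
      abs_inner_le_norm_if_unit[of _ z] by auto
  finally show ?thesis .
qed

lemma borel_measurable_second_moment [measurable]: "second_moment M \<in> borel_measurable borel"
proof -
  have "(\<lambda>(z, x). (x \<bullet> z) *\<^sub>R x) \<in> borel_measurable (borel :: ('a \<times> 'a) measure)"
    unfolding borel_prod[symmetric] by measurable
  then show ?thesis
    unfolding second_moment_def[abs_def]
    by (rule borel_measurable_integral_parametric[of "\<lambda>z x. (x \<bullet> z) *\<^sub>R x"])
qed

lemma frame_potential_eq_integral_second_moment:
  "frame_potential M = (\<integral>z. z \<bullet> second_moment M z \<partial>M)"
  unfolding frame_potential_def using inner_second_moment by (simp add: power2_eq_square)

lemma triple_integral_inner_cycle_eq:
  "triple_integral M inner_cycle = (\<integral>z. (norm (second_moment M z))\<^sup>2 \<partial>M)"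
proof -
  have "(\<integral>y. \<integral>x. inner_cycle x y z \<partial>M \<partial>M) = (norm (second_moment M z))\<^sup>2" for z
    using inner_second_moment[of _ z] inner_second_moment[of "second_moment M z" z]
    by (simp add: inner_cycle_def power2_norm_eq_inner)
  then show ?thesis by (simp add: triple_integral_def)
qed

lemma frame_potential_square_le: "(frame_potential M)\<^sup>2 \<le> triple_integral M inner_cycle"
proof -
  let ?A = "second_moment M"
  have A_le_1: "norm (?A z) \<le> 1" if "norm z = 1" for z
    using norm_second_moment_le[of z] that by simp
  have int_norm: "integrable M (\<lambda>z. norm (?A z))"
    using A_le_1 by (intro integrable_bounded_on_sphere[where C = 1]) auto
  have int_norm_sq: "integrable M (\<lambda>z. (norm (?A z))\<^sup>2)"
    using A_le_1 by (intro integrable_bounded_on_sphere[where C = 1]) (auto simp: power_le_one)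
  have int_inner: "integrable M (\<lambda>z. z \<bullet> ?A z)"
  proof (rule integrable_bounded_on_sphere[where C = 1])
    fix z :: 'a assume "norm z = 1"
    then show "norm (z \<bullet> ?A z) \<le> 1"
      using abs_inner_le_norm_if_unit[of z "?A z"] A_le_1[of z] by simp
  qed simp
  have "AE z in M. z \<bullet> ?A z \<le> norm (?A z)"
    using AE_norm_eq_1 by (rule eventually_mono) (metis abs_inner_le_norm_if_unit abs_le_D1)
  then have "frame_potential M \<le> (\<integral>z. norm (?A z) \<partial>M)"
    unfolding frame_potential_eq_integral_second_moment
    by (intro integral_mono_AE int_inner int_norm)
  moreover have "0 \<le> frame_potential M"
    by (simp add: frame_potential_def integral_nonneg)
  ultimately have "(frame_potential M)\<^sup>2 \<le> (\<integral>z. norm (?A z) \<partial>M)\<^sup>2"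
    by (rule power_mono)
  also have "\<dots> \<le> triple_integral M inner_cycle"
    unfolding triple_integral_inner_cycle_eq by (rule square_expectation_le[OF int_norm int_norm_sq])
  finally show ?thesis .
qed

lemma integral_inner_square:
  "(\<integral>x. (x \<bullet> u)\<^sup>2 \<partial>M) =
    (\<Sum>i\<in>Basis. \<Sum>j\<in>Basis. (\<integral>x. (x \<bullet> i) * (x \<bullet> j) \<partial>M) * ((u \<bullet> i) * (u \<bullet> j)))"
  unfolding inner_square_eq_sum_Basis[of _ u] using integrable_inner_mult_inner
  by (simp add: integral_sum)

lemma frame_potential_eq_sum_squares:
  "frame_potential M = (\<Sum>i\<in>Basis. \<Sum>j\<in>Basis. (\<integral>x. (x \<bullet> i) * (x \<bullet> j) \<partial>M)\<^sup>2)"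
  unfolding frame_potential_def integral_inner_square using integrable_inner_mult_inner
  by (simp add: integral_sum power2_eq_square)

lemma sum_Basis_second_moments: "(\<Sum>i\<in>Basis. \<integral>x. (x \<bullet> i) * (x \<bullet> i) \<partial>M) = 1"
proof -
  have "(\<lambda>x. x \<bullet> x) = (\<lambda>x::'a. \<Sum>i\<in>Basis. (x \<bullet> i) * (x \<bullet> i))"
    by (rule ext) (rule euclidean_inner)
  then have "(\<Sum>i\<in>Basis. \<integral>x. (x \<bullet> i) * (x \<bullet> i) \<partial>M) = (\<integral>x. x \<bullet> x \<partial>M)"
    using integrable_inner_mult_inner by (simp add: integral_sum)
  also have "\<dots> = (\<integral>x. 1 \<partial>M)"
    using AE_norm_eq_1 by (intro integral_cong_AE) (auto elim!: eventually_mono simp: norm_eq_1)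
  finally show ?thesis by (simp add: prob_space)
qed

lemma frame_potential_ge: "1 / real DIM('a) \<le> frame_potential M"
  using sum_squares_ge_trace_square_div_card[of Basis "\<lambda>i j. \<integral>x. (x \<bullet> i) * (x \<bullet> j) \<partial>M"]
  unfolding frame_potential_eq_sum_squares sum_Basis_second_moments by simp

lemma triple_integral_inner_cycle_le_triple_energy:
  assumes "0 \<le> p" and "p \<le> 1"
  shows "triple_integral M inner_cycle \<le> triple_energy p M"
  unfolding triple_energy_eq_triple_integral
  using borel_measurable_inner_cycle abs_inner_cycle_le_1 le_abs_powr assms
  by (intro triple_integral_mono[where C = 1]) (auto simp: powr_le1)

end

section \<open>The extremal measures\<close>

definition isotropic :: "'a::euclidean_space measure \<Rightarrow> bool" where
  "isotropic M \<longleftrightarrow> (\<forall>u. (\<integral>x. (x \<bullet> u)\<^sup>2 \<partial>M) = (norm u)\<^sup>2 / real DIM('a))"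

definition uniform_on_signed_onb :: "'a::euclidean_space measure \<Rightarrow> bool" where
  "uniform_on_signed_onb M \<longleftrightarrow>
     (\<exists>e :: nat \<Rightarrow> 'a.
        (\<forall>i<DIM('a). \<forall>j<DIM('a). e i \<bullet> e j = (if i = j then 1 else 0)) \<and>
        emeasure M (\<Union>j<DIM('a). {e j, - e j}) = 1 \<and>
        (\<forall>j<DIM('a). emeasure M {e j, - e j} = ennreal (1 / real DIM('a))))"

context sphere_probability
begin

lemma isotropic_if_frame_potential_eq:
  assumes "frame_potential M = 1 / real DIM('a)"
  shows "isotropic M"
  unfolding isotropic_def
proof
  fix u :: 'a
  have moments: "(\<integral>x. (x \<bullet> i) * (x \<bullet> j) \<partial>M) = (if i = j then 1 / real DIM('a) else 0)"
    if "i \<in> Basis" "j \<in> Basis" for i j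
    using sum_squares_eq_trace_square_div_cardD[of Basis "\<lambda>i j. \<integral>x. (x \<bullet> i) * (x \<bullet> j) \<partial>M" i j]
      assms that
    unfolding frame_potential_eq_sum_squares sum_Basis_second_moments by simp
  have "(\<integral>x. (x \<bullet> u)\<^sup>2 \<partial>M) =
      (\<Sum>i\<in>Basis. \<Sum>j\<in>Basis. if j = i then (u \<bullet> i) * (u \<bullet> j) / real DIM('a) else 0)"
    unfolding integral_inner_square by (intro sum.cong refl) (simp add: moments)
  also have "\<dots> = (\<Sum>i\<in>Basis. (u \<bullet> i) * (u \<bullet> i)) / real DIM('a)"
    by (simp add: sum_divide_distrib)
  also have "\<dots> = (norm u)\<^sup>2 / real DIM('a)"
    by (simp add: power2_norm_eq_inner euclidean_inner[of u u])
  finally show "(\<integral>x. (x \<bullet> u)\<^sup>2 \<partial>M) = (norm u)\<^sup>2 / real DIM('a)" .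
qed

lemma AE_inner_cycle_01_if_eq_triple_energy:
  assumes "0 < p" "p < 1" and "triple_integral M inner_cycle = triple_energy p M"
  shows "AE z in M. AE y in M. AE x in M. inner_cycle x y z \<in> {0, 1}"
proof -
  have "AE z in M. AE y in M. AE x in M. inner_cycle x y z = \<bar>inner_cycle x y z\<bar> powr p"
    using borel_measurable_inner_cycle abs_inner_cycle_le_1 le_abs_powr assms
    by (intro triple_integral_eq_imp_AE_eq[where C = 1])
      (auto simp: powr_le1 triple_energy_eq_triple_integral)
  then show ?thesis by (simp add: eq_abs_powr_iff[OF assms(1,2)])
qed

lemma measure_support_subset_sphere: "measure_support M \<subseteq> sphere 0 1"
  using AE_norm_eq_1 by (intro measure_support_subset_closed[OF sets_eq_borel]) auto

lemma measure_support_parallel_or_orthogonal: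
  assumes AE01: "AE z in M. AE y in M. AE x in M. inner_cycle x y z \<in> {0, 1}"
    and x: "x \<in> measure_support M" and y: "y \<in> measure_support M"
  shows "x \<bullet> y = 0 \<or> (x \<bullet> y)\<^sup>2 = 1"
proof -
  have "inner_cycle x y x \<in> {0, 1}"
    by (rule AE3_closed_on_measure_support[OF sets_eq_borel continuous_on_inner_cycle _ AE01 x y x])
      simp
  moreover have "inner_cycle x y x = (x \<bullet> y)\<^sup>2"
    using measure_support_subset_sphere x
    by (auto simp: inner_cycle_def power2_eq_square inner_commute norm_eq_1)
  ultimately show ?thesis by auto
qed

lemma isotropic_concentrated_on_orthonormal_card:
  assumes iso: "isotropic M" and orth: "pairwise orthogonal R" and unit: "R \<subseteq> sphere 0 1"
    and conc: "AE x in M. x \<in> R \<union> uminus ` R"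
  shows "finite R" and "card R = DIM('a)"
proof -
  have "independent R"
    using orth unit by (intro pairwise_orthogonal_independent) auto
  then have card_le: "card R \<le> DIM('a)" and fin: "finite R"
    using independent_bound by auto
  then show "finite R" by simp
  show "card R = DIM('a)"
  proof (rule ccontr)
    assume "card R \<noteq> DIM('a)"
    then have "dim R < DIM('a)"
      using card_le dim_le_card[of R R] fin span_superset by fastforce
    then obtain u :: 'a where u: "u \<noteq> 0" "\<And>y. y \<in> span R \<Longrightarrow> orthogonal u y"
      using orthogonal_to_subspace_exists by blast
    have "u \<bullet> x = 0" if "x \<in> R \<union> uminus ` R" for x
      using that u(2)[OF span_base] by (auto simp: orthogonal_def)
    then have "AE x in M. (x \<bullet> u)\<^sup>2 = 0"
      using conc by (auto elim!: eventually_mono simp: inner_commute[of _ u])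
    then have "(\<integral>x. (x \<bullet> u)\<^sup>2 \<partial>M) = 0"
      by (simp add: integral_eq_zero_AE)
    with iso u(1) show False by (simp add: isotropic_def)
  qed
qed

lemma isotropic_concentrated_on_orthonormal_measure:
  assumes iso: "isotropic M" and orth: "pairwise orthogonal R" and unit: "R \<subseteq> sphere 0 1"
    and conc: "AE x in M. x \<in> R \<union> uminus ` R" and r: "r \<in> R"
  shows "measure M {r, - r} = 1 / real DIM('a)"
proof -
  have r_unit: "r \<bullet> r = 1" using unit r by (auto simp: norm_eq_1)
  have "AE x in M. (x \<bullet> r)\<^sup>2 = indicator {r, - r} x"
    using conc
  proof (rule eventually_mono)
    fix x assume "x \<in> R \<union> uminus ` R"
    then obtain s where s: "s \<in> R" "x = s \<or> x = - s" by auto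
    show "(x \<bullet> r)\<^sup>2 = indicator {r, - r} x"
    proof (cases "s = r")
      case False
      then have "s \<bullet> r = 0" using orth s(1) r by (auto simp: pairwise_def orthogonal_def)
      moreover from this have "s \<noteq> - r" using r_unit by auto
      ultimately show ?thesis using s(2) False by (auto simp: indicator_def)
    qed (use s(2) r_unit in auto)
  qed
  then have "(\<integral>x. (x \<bullet> r)\<^sup>2 \<partial>M) = (\<integral>x. indicator {r, - r} x \<partial>M)"
    by (intro integral_cong_AE) (auto simp: borel_measurable_iff)
  then show ?thesis
    using iso unit r by (auto simp: space_eq_UNIV isotropic_def)
qed

lemma uniform_on_signed_onb_if_isotropic:
  assumes iso: "isotropic M"
    and support: "\<And>x y. x \<in> measure_support M \<Longrightarrow> y \<in> measure_support M \<Longrightarrow>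
      x \<bullet> y = 0 \<or> (x \<bullet> y)\<^sup>2 = 1"
  shows "uniform_on_signed_onb M"
proof -
  obtain R where orth: "pairwise orthogonal R" and unit: "R \<subseteq> sphere 0 1"
    and cover: "measure_support M \<subseteq> R \<union> uminus ` R"
    using obtain_orthonormal_representatives[OF measure_support_subset_sphere support] by blast
  have conc: "AE x in M. x \<in> R \<union> uminus ` R"
    using AE_in_measure_support[OF sets_eq_borel] cover by (auto elim!: eventually_mono)
  note R = isotropic_concentrated_on_orthonormal_card[OF iso orth unit conc]
  obtain e where e: "bij_betw e {..<DIM('a)} R"
    using ex_bij_betw_nat_finite[OF R(1)] R(2) by (auto simp: atLeast0LessThan)
  then have e_img: "e ` {..<DIM('a)} = R" and e_R: "\<And>j. j < DIM('a) \<Longrightarrow> e j \<in> R"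
    by (auto simp: bij_betw_def)
  have "e i \<bullet> e j = (if i = j then 1 else 0)" if "i < DIM('a)" "j < DIM('a)" for i j
  proof (cases "i = j")
    case False
    then have "e i \<noteq> e j" using e that by (auto simp: bij_betw_def inj_on_def)
    then show ?thesis using orth e_R that False by (auto simp: pairwise_def orthogonal_def)
  next
    case True
    have "e j \<in> sphere 0 1" using unit e_R that(2) by blast
    with True show ?thesis by (simp add: norm_eq_1)
  qed
  moreover have "emeasure M (\<Union>j<DIM('a). {e j, - e j}) = 1"
  proof -
    have "(\<Union>j<DIM('a). {e j, - e j}) = R \<union> uminus ` R" using e_img by auto
    moreover have "finite (R \<union> uminus ` R)" using R(1) by simp
    ultimately show ?thesis
      using conc AE_in_set_eq_1[of "R \<union> uminus ` R"]
      by (simp add: sets_eq_borel finite_imp_closed emeasure_eq_measure)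
  qed
  moreover have "emeasure M {e j, - e j} = ennreal (1 / real DIM('a))" if "j < DIM('a)" for j
    using isotropic_concentrated_on_orthonormal_measure[OF iso orth unit conc e_R[OF that]]
    by (simp add: emeasure_eq_measure)
  ultimately show ?thesis unfolding uniform_on_signed_onb_def by blast
qed

lemma triple_energy_if_uniform_on_signed_onb:
  assumes "0 < p" and "uniform_on_signed_onb M"
  shows "triple_energy p M = 1 / (real DIM('a))\<^sup>2"
proof -
  obtain e :: "nat \<Rightarrow> 'a" where onb: "\<forall>i<DIM('a). \<forall>j<DIM('a). e i \<bullet> e j = (if i = j then 1 else 0)"
    and full: "emeasure M (\<Union>j<DIM('a). {e j, - e j}) = 1"
    and mass: "\<And>j. j < DIM('a) \<Longrightarrow> emeasure M {e j, - e j} = ennreal (1 / real DIM('a))"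
    using assms(2) unfolding uniform_on_signed_onb_def by blast
  define P where "P j = {e j, - e j}" for j
  define U where "U = (\<Union>j<DIM('a). P j)"
  have P_sets [measurable]: "P j \<in> sets borel" for j
    by (simp add: P_def finite_imp_closed)
  have meas: "(\<lambda>((z, y), x). \<Sum>j<DIM('a). indicator (P j) x * indicator (P j) y * indicator (P j) z :: real)
      \<in> borel_measurable borel"
    unfolding case_prod_nested_eq borel_prod[symmetric] by measurable
  have AE_U: "AE x in M. x \<in> U"
    using full AE_in_set_eq_1[of U] by (simp add: U_def P_def sets_eq_borel finite_imp_closed emeasure_eq_measure)
  have on_U: "\<bar>inner_cycle x y z\<bar> powr p =
      (\<Sum>j<DIM('a). indicator (P j) x * indicator (P j) y * indicator (P j) z)"
    if "x \<in> U" "y \<in> U" "z \<in> U" for x y z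
    using abs_inner_cycle_powr_signed_orthonormal[OF onb assms(1)] that by (simp add: U_def P_def)
  have "triple_energy p M =
      triple_integral M (\<lambda>x y z. \<Sum>j<DIM('a). indicator (P j) x * indicator (P j) y * indicator (P j) z)"
    unfolding triple_energy_eq_triple_integral
    by (rule triple_integral_cong_AE[OF borel_measurable_inner_cycle(2) meas AE_U on_U])
  also have "\<dots> = (\<Sum>j<DIM('a). (measure M (P j))^3)"
    by (rule triple_integral_sum_indicator_cubes) (auto simp: sets_eq_borel)
  also have "\<dots> = (\<Sum>j<DIM('a). (1 / real DIM('a))^3)"
    using mass by (intro sum.cong) (auto simp: P_def emeasure_eq_measure)
  also have "\<dots> = 1 / (real DIM('a))\<^sup>2"
    by (simp add: power2_eq_square power3_eq_cube)
  finally show ?thesis .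
qed

lemma triple_energy_ge:
  assumes "0 \<le> p" and "p \<le> 1"
  shows "1 / (real DIM('a))\<^sup>2 \<le> triple_energy p M"
proof -
  have "(1 / real DIM('a))\<^sup>2 \<le> (frame_potential M)\<^sup>2"
    using frame_potential_ge by (intro power_mono) auto
  also have "\<dots> \<le> triple_integral M inner_cycle"
    by (rule frame_potential_square_le)
  also have "\<dots> \<le> triple_energy p M"
    using assms by (rule triple_integral_inner_cycle_le_triple_energy)
  finally show ?thesis by (simp add: power_divide)
qed

lemma uniform_on_signed_onb_if_triple_energy_eq:
  assumes "0 < p" and "p < 1" and eq: "triple_energy p M = 1 / (real DIM('a))\<^sup>2"
  shows "uniform_on_signed_onb M"
proof -
  let ?d = "real DIM('a)"
  have chain: "(frame_potential M)\<^sup>2 \<le> triple_integral M inner_cycle"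
    "triple_integral M inner_cycle \<le> triple_energy p M"
    using frame_potential_square_le triple_integral_inner_cycle_le_triple_energy assms(1,2) by auto
  have "(1 / ?d)\<^sup>2 \<le> (frame_potential M)\<^sup>2"
    using frame_potential_ge by (intro power_mono) auto
  moreover have "(frame_potential M)\<^sup>2 \<le> (1 / ?d)\<^sup>2"
    using chain eq by (simp add: power_divide)
  ultimately have "frame_potential M = 1 / ?d"
    and "triple_integral M inner_cycle = triple_energy p M"
    using frame_potential_ge chain eq power2_le_imp_le[of "frame_potential M" "1 / ?d"]
    by (auto simp: power_divide)
  then show ?thesis
    using assms(1,2)
    by (intro uniform_on_signed_onb_if_isotropic isotropic_if_frame_potential_eq
        measure_support_parallel_or_orthogonal AE_inner_cycle_01_if_eq_triple_energy)
qed

end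

lemma sphere_probabilityI:
  assumes "prob_space M" and "sets M = sets borel" and "emeasure M (sphere 0 1) = 1"
  shows "sphere_probability M"
proof -
  interpret prob_space M by fact
  have "AE x in M. x \<in> sphere 0 1"
    using assms(3) by (subst AE_in_set_eq_1) (auto simp: assms(2) emeasure_eq_measure)
  then show ?thesis
    by unfold_locales (auto simp: assms(2) elim: eventually_mono)
qed

theorem theorem4p4:
  fixes M :: "'a::euclidean_space measure" and p :: real
  assumes "0 < p" and "p < 1"
    and "prob_space M" and "sets M = sets borel"
    and "emeasure M (sphere 0 1) = 1"
  shows "triple_energy p M \<ge> 1 / (real DIM('a))\<^sup>2
    \<and> (triple_energy p M = 1 / (real DIM('a))\<^sup>2 \<longleftrightarrow>
        (\<exists>e :: nat \<Rightarrow> 'a.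
           (\<forall>i<DIM('a). \<forall>j<DIM('a). e i \<bullet> e j = (if i = j then 1 else 0)) \<and>
           emeasure M (\<Union>j<DIM('a). {e j, - e j}) = 1 \<and>
           (\<forall>j<DIM('a). emeasure M {e j, - e j} = ennreal (1 / real DIM('a)))))"
proof -
  interpret sphere_probability M
    using assms(3-5) by (rule sphere_probabilityI)
  show ?thesis
    unfolding uniform_on_signed_onb_def[symmetric]
    using triple_energy_ge uniform_on_signed_onb_if_triple_energy_eq
      triple_energy_if_uniform_on_signed_onb assms(1,2)
    by (meson less_imp_le)
qed

end
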